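(* Define $A_0=E_3$ and $B_0=F_3q^{-G_1-G_3}$, let $X=A_0B_0-q^{-2}B_0A_0$, and recursively for $k\ge1$ $$A_k=[2]_q^{-1}(A_{k-1}X-XA_{k-1}),\qquad B_k=[2]_q^{-1}(XB_{k-1}-B_{k-1}X).$$ Let $\mathcal E_{\alpha+\beta}(\zeta)=\sum_{k\ge0}A_k\zeta^k$ and $\mathcal E_{\delta-\alpha-\beta}(\zeta)=\sum_{k\ge0}B_k\zeta^k$. Then in $\mathrm U_q(\mathfrak{gl}_3)[[\zeta]]$: $$\mathcal E_{\alpha+\beta}(\zeta)=\kappa_q^{-1}N'_{31}N'_{11}(-q^{-2}\zeta)^{-1},\qquad \mathcal E_{\delta-\alpha-\beta}(\zeta)=\kappa_q^{-1}q^{-1}N'_{11}(-q^{-2}\zeta)^{-1}N'_{13}.$$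
   Context: Setting: $\hbar\in\mathbb C$, $q=e^\hbar$, $q^2\neq1$, $\kappa_q=q-q^{-1}$, $[\nu]_q=(q^\nu-q^{-\nu})/\kappa_q$ (so $[2]_q=q+q^{-1}$, assumed nonzero). Let $\mathfrak g=\mathbb CG_1\oplus\mathbb CG_2\oplus\mathbb CG_3$ and define linear forms $\alpha_1,\alpha_2$ on $\mathfrak g$ by $\alpha_1(G_1)=1,\alpha_1(G_2)=-1,\alpha_1(G_3)=0$, $\alpha_2(G_1)=0,\alpha_2(G_2)=1,\alpha_2(G_3)=-1$; put $H_1=G_1-G_2$, $H_2=G_2-G_3$. $\mathrm U_q(\mathfrak{gl}_3)$ is the unital associative $\mathbb C$-algebra generated by $E_1,E_2,F_1,F_2$ and symbols $q^X$, $X\in\mathfrak g$, with relations $q^0=1$, $q^{X_1}q^{X_2}=q^{X_1+X_2}$, $q^XE_iq^{-X}=q^{\alpha_i(X)}E_i$, $q^XF_iq^{-X}=q^{-\alpha_i(X)}F_i$, $[E_i,F_j]=\delta_{ij}(q^{H_i}-q^{-H_i})/\kappa_q$, and for $i\ne j$ the $q$-Serre relations $E_i^2E_j-[2]_qE_iE_jE_i+E_jE_i^2=0$, $F_i^2F_j-[2]_qF_iF_jF_i+F_jF_i^2=0$. For $\nu\in\mathbb C$ one writes $q^{X+\nu}=q^\nu q^X$. Further $E_3=E_1E_2-q^{-1}E_2E_1$, $F_3=F_2F_1-qF_1F_2$. In $\mathrm U_q(\mathfrak{gl}_3)[[\zeta]]$ ($\zeta$ a formal variable) let $N'_{11}(\zeta)=1-\zeta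 q^{-2G_1}$ (invertible as a series), $N'_{13}=\kappa_q qF_3q^{-G_1-G_3}$, $N'_{31}=\kappa_qE_3$; $N'_{11}(c\zeta)$ denotes substitution $\zeta\mapsto c\zeta$. *)

theory Defs
  imports Complex_Main "HOL-Computational_Algebra.Formal_Power_Series"
begin

(* q^nu = e^(hbar nu) *)
definition qp :: "complex \<Rightarrow> complex \<Rightarrow> complex" where
  "qp h \<nu> = exp (h * \<nu>)"

definition kap :: "complex \<Rightarrow> complex" where
  "kap h = qp h 1 - qp h (-1)"

definition qint2 :: "complex \<Rightarrow> complex" where
  "qint2 h = qp h 1 + qp h (-1)"

definition ring_inv :: "'a::ring_1 \<Rightarrow> 'a" where
  "ring_inv u = (THE v. u * v = 1 \<and> v * u = 1)"

(* The defining relations of U_q(gl_3), realised in a unital ring 'a which is a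
   complex algebra via the central unital ring homomorphism \<iota> : complex \<Rightarrow> 'a.
   K a b c stands for q^X with X = a G1 + b G2 + c G3. *)
definition Uq_gl3_rels ::
  "complex \<Rightarrow> (complex \<Rightarrow> 'a::ring_1) \<Rightarrow> 'a \<Rightarrow> 'a \<Rightarrow> 'a \<Rightarrow> 'a
     \<Rightarrow> (complex \<Rightarrow> complex \<Rightarrow> complex \<Rightarrow> 'a) \<Rightarrow> bool" where
  "Uq_gl3_rels h \<iota> E1 E2 F1 F2 K \<longleftrightarrow>
     \<iota> 1 = 1 \<and> (\<forall>a b. \<iota> (a + b) = \<iota> a + \<iota> b) \<and> (\<forall>a b. \<iota> (a * b) = \<iota> a * \<iota> b) \<and>
     (\<forall>c x. \<iota> c * x = x * \<iota> c) \<and>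
     K 0 0 0 = 1 \<and>
     (\<forall>a b c a' b' c'. K a b c * K a' b' c' = K (a + a') (b + b') (c + c')) \<and>
     (\<forall>a b c. K a b c * E1 * K (-a) (-b) (-c) = \<iota> (qp h (a - b)) * E1) \<and>
     (\<forall>a b c. K a b c * E2 * K (-a) (-b) (-c) = \<iota> (qp h (b - c)) * E2) \<and>
     (\<forall>a b c. K a b c * F1 * K (-a) (-b) (-c) = \<iota> (qp h (-(a - b))) * F1) \<and>
     (\<forall>a b c. K a b c * F2 * K (-a) (-b) (-c) = \<iota> (qp h (-(b - c))) * F2) \<and>
     E1 * F1 - F1 * E1 = \<iota> (1 / kap h) * (K 1 (-1) 0 - K (-1) 1 0) \<and>
     E2 * F2 - F2 * E2 = \<iota> (1 / kap h) * (K 0 1 (-1) - K 0 (-1) 1) \<and>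
     E1 * F2 - F2 * E1 = 0 \<and>
     E2 * F1 - F1 * E2 = 0 \<and>
     E1 * E1 * E2 - \<iota> (qint2 h) * (E1 * E2 * E1) + E2 * E1 * E1 = 0 \<and>
     E2 * E2 * E1 - \<iota> (qint2 h) * (E2 * E1 * E2) + E1 * E2 * E2 = 0 \<and>
     F1 * F1 * F2 - \<iota> (qint2 h) * (F1 * F2 * F1) + F2 * F1 * F1 = 0 \<and>
     F2 * F2 * F1 - \<iota> (qint2 h) * (F2 * F1 * F2) + F1 * F2 * F2 = 0"

fun Aseq :: "'a::ring_1 \<Rightarrow> 'a \<Rightarrow> 'a \<Rightarrow> nat \<Rightarrow> 'a" where
  "Aseq c A0 X 0 = A0"
| "Aseq c A0 X (Suc k) = c * (Aseq c A0 X k * X - X * Aseq c A0 X k)"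

fun Bseq :: "'a::ring_1 \<Rightarrow> 'a \<Rightarrow> 'a \<Rightarrow> nat \<Rightarrow> 'a" where
  "Bseq c B0 X 0 = B0"
| "Bseq c B0 X (Suc k) = c * (X * Bseq c B0 X k - Bseq c B0 X k * X)"

definition N11 :: "(complex \<Rightarrow> 'a::ring_1) \<Rightarrow> (complex \<Rightarrow> complex \<Rightarrow> complex \<Rightarrow> 'a) \<Rightarrow> complex \<Rightarrow> 'a fps" where
  "N11 \<iota> K c = 1 - fps_const (\<iota> c * K (-2) 0 0) * fps_X"

end

theory Submission imports Defs begin

(* Put T = q^{-2G_1}, A_0 = E_3, B_0 = F_3 q^{-G_1-G_3} and
   X = A_0 B_0 - q^{-2} B_0 A_0.  A direct computation in U_q(gl_3) gives
     T X = X T,   A_0 X - X A_0 = -q^{-2}[2]_q A_0 T,   X B_0 - B_0 X = -q^{-2}[2]_q T B_0,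
   so the commutator recursions defining A_k, B_k collapse to the closed forms
   A_k = (-q^{-2})^k A_0 T^k and B_k = (-q^{-2})^k T^k B_0.  Both generating functions
   are therefore geometric series in zeta T, i.e. multiples of the inverse of
   N'_11(-q^{-2} zeta) = 1 + q^{-2} zeta T. *)

definition central :: "'a::ring_1 \<Rightarrow> bool" where
  "central z \<longleftrightarrow> (\<forall>y. z * y = y * z)"

lemma central_mult: "central u \<Longrightarrow> central v \<Longrightarrow> central (u * v)"
  unfolding central_def by (metis mult.assoc)

lemma central_power: "central u \<Longrightarrow> central (u ^ k)"
  unfolding central_def by (simp add: power_commuting_commutes)

lemma power_mult_central:
  assumes "central u" shows "(u * t) ^ k = u ^ k * t ^ k"
proof (induction k)
  case (Suc k)
  have "(u * t) ^ Suc k = u * t * (u ^ k * t ^ k)" using Suc by simp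
  also have "\<dots> = u * u ^ k * (t * t ^ k)"
    using assms central_power[OF assms, of k] unfolding central_def by (metis mult.assoc)
  finally show ?case by simp
qed simp

lemma Aseq_closed_form:
  assumes c: "central c" and m: "central m"
    and comm: "A0 * X - X * A0 = m * (A0 * T)" and TX: "T * X = X * T"
  shows "Aseq c A0 X k = (c * m) ^ k * (A0 * T ^ k)"
proof (induction k)
  case (Suc k)
  define z where "z = (c * m) ^ k"
  have z: "central z" unfolding z_def by (intro central_power central_mult c m)
  have TkX: "T ^ k * X = X * T ^ k" by (rule power_commuting_commutes[OF TX])
  have "Aseq c A0 X (Suc k) = c * (z * (A0 * T ^ k) * X - X * (z * (A0 * T ^ k)))"
    using Suc by (simp add: z_def)
  also have "\<dots> = c * (z * ((A0 * X - X * A0) * T ^ k))"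
  proof -
    have "z * (A0 * T ^ k) * X = z * (A0 * X * T ^ k)" using TkX by (simp add: mult.assoc)
    moreover have "X * (z * (A0 * T ^ k)) = z * (X * A0 * T ^ k)"
      using z unfolding central_def by (metis mult.assoc)
    ultimately show ?thesis by (simp add: left_diff_distrib right_diff_distrib)
  qed
  also have "\<dots> = c * (z * m * (A0 * T * T ^ k))" by (simp add: comm mult.assoc)
  also have "\<dots> = c * m * z * (A0 * T ^ Suc k)"
    using m unfolding central_def by (metis mult.assoc power_Suc)
  also have "\<dots> = (c * m) ^ Suc k * (A0 * T ^ Suc k)" by (simp add: z_def)
  finally show ?case .
qed simp

lemma Bseq_closed_form:
  assumes c: "central c" and m: "central m"
    and comm: "X * B0 - B0 * X = m * (T * B0)" and TX: "T * X = X * T"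
  shows "Bseq c B0 X k = (c * m) ^ k * (T ^ k * B0)"
proof (induction k)
  case (Suc k)
  define z where "z = (c * m) ^ k"
  have z: "central z" unfolding z_def by (intro central_power central_mult c m)
  have TkX: "T ^ k * X = X * T ^ k" by (rule power_commuting_commutes[OF TX])
  have "Bseq c B0 X (Suc k) = c * (X * (z * (T ^ k * B0)) - z * (T ^ k * B0) * X)"
    using Suc by (simp add: z_def)
  also have "\<dots> = c * (z * (T ^ k * (X * B0 - B0 * X)))"
  proof -
    have "X * (z * (T ^ k * B0)) = z * (T ^ k * (X * B0))"
      using z TkX unfolding central_def by (metis mult.assoc)
    moreover have "z * (T ^ k * B0) * X = z * (T ^ k * (B0 * X))" by (simp add: mult.assoc)
    ultimately show ?thesis by (simp add: left_diff_distrib right_diff_distrib)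
  qed
  also have "\<dots> = c * (z * (T ^ k * m * (T * B0)))" by (simp add: comm mult.assoc)
  also have "\<dots> = c * (z * m * (T ^ k * T * B0))"
    using m unfolding central_def by (metis mult.assoc)
  also have "\<dots> = c * m * z * (T ^ Suc k * B0)"
    using m unfolding central_def by (metis mult.assoc power_Suc2)
  also have "\<dots> = (c * m) ^ Suc k * (T ^ Suc k * B0)" by (simp add: z_def)
  finally show ?case .
qed simp

(* Two-sided inverses are unique, so ring_inv returns any of them. *)
lemma ring_inv_eqI:
  fixes u :: "'a::ring_1"
  assumes uv: "u * v = 1" and vu: "v * u = 1"
  shows "ring_inv u = v"
  unfolding ring_inv_def
proof (rule the_equality)
  fix w assume "u * w = 1 \<and> w * u = 1"
  then have "w * u = 1" by simp
  have "w = w * (u * v)" using uv by simp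
  also have "\<dots> = v" using \<open>w * u = 1\<close> by (simp flip: mult.assoc)
  finally show "w = v" .
qed (use uv vu in simp)

lemma fps_geometric_ring_inv:
  fixes u :: "'a::ring_1"
  shows "ring_inv (1 - fps_const u * fps_X) = Abs_fps (\<lambda>k. u ^ k)"
proof (rule ring_inv_eqI)
  show "(1 - fps_const u * fps_X) * Abs_fps (\<lambda>k. u ^ k) = 1"
    by (rule fps_ext, case_tac n) (simp_all add: left_diff_distrib mult.assoc)
  show "Abs_fps (\<lambda>k. u ^ k) * (1 - fps_const u * fps_X) = 1"
    by (rule fps_ext, case_tac n) (simp_all add: right_diff_distrib power_commutes flip: mult.assoc)
qed

(* Turns a commutation rule a b = c into its form inside a right-nested word; the
   simplifier normalises products to right-nested form, so it needs both versions. *)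
lemma mult_assoc_rule: "a * b = c \<Longrightarrow> a * (b * y) = c * (y::'a::semigroup_mult)"
  by (simp flip: mult.assoc)

(* q-number identities: q^a q^b = q^{a+b}, kappa_q \<noteq> 0 for q^2 \<noteq> 1, and the scalar
   identities that appear when normalising E_3 F_3, [A_0, X] and [X, B_0]. *)
lemma qp_add: "qp h a * qp h b = qp h (a + b)"
  by (simp add: qp_def exp_add distrib_left)

lemma qp_add_assoc: "qp h a * (qp h b * z) = qp h (a + b) * z"
  by (simp add: qp_add flip: mult.assoc)

lemma qp_zero: "qp h 0 = 1"
  by (simp add: qp_def)

lemma kap_nonzero: "(exp h)^2 \<noteq> 1 \<Longrightarrow> kap h \<noteq> 0"
  unfolding kap_def qp_def by (auto simp: power2_eq_square exp_minus field_simps)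

lemma kap_identity:
  assumes "kap h \<noteq> 0"
  shows "qp h 1 / (kap h * kap h) = 1 / kap h + qp h (- 1) / (kap h * kap h)"
proof -
  have "qp h 1 = kap h + qp h (-1)" unfolding kap_def by simp
  then show ?thesis using assms by (simp add: field_simps)
qed

lemma qp_identity_A:
  assumes "kap h \<noteq> 0"
  shows "qp h (- 2) / kap h + qp h (- 4) / kap h
    = 1 / kap h + qp h (- 2) / kap h - qint2 h * qp h (- 2)"
proof -
  have "qp h (-4) = 1 - qint2 h * qp h (-2) * kap h"
    unfolding qp_def qint2_def kap_def
    by (simp add: exp_minus field_simps power2_eq_square flip: exp_add exp_diff)
  then show ?thesis using assms by (simp add: field_simps)
qed

lemma qp_identity_B:
  assumes "kap h \<noteq> 0"
  shows "1 / kap h + qp h (- 2) / kap h = 1 / kap h + qp h 2 / kap h - qint2 h"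
proof -
  have "qp h 2 - qp h (-2) = qint2 h * kap h"
    unfolding qp_def qint2_def kap_def
    by (simp add: exp_minus field_simps power2_eq_square flip: exp_add exp_diff)
  then show ?thesis using assms by (simp add: field_simps)
qed

locale uq_gl3 =
  fixes h :: complex and \<iota> :: "complex \<Rightarrow> 'a::ring_1"
    and E1 E2 F1 F2 :: 'a and K :: "complex \<Rightarrow> complex \<Rightarrow> complex \<Rightarrow> 'a"
  assumes rels: "Uq_gl3_rels h \<iota> E1 E2 F1 F2 K" and q_square: "(exp h)^2 \<noteq> 1"
begin

lemma kap_nz: "kap h \<noteq> 0"
  using kap_nonzero[OF q_square] .

lemma iota_1: "\<iota> 1 = 1" using rels unfolding Uq_gl3_rels_def by metis
lemma iota_add: "\<iota> (a + b) = \<iota> a + \<iota> b" using rels unfolding Uq_gl3_rels_def by metis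
lemma iota_mult: "\<iota> (a * b) = \<iota> a * \<iota> b" using rels unfolding Uq_gl3_rels_def by metis
lemma iota_central: "central (\<iota> c)" using rels unfolding Uq_gl3_rels_def central_def by metis
lemma iota_0: "\<iota> 0 = 0" using iota_add[of 0 0] by simp

lemma iota_power: "\<iota> (a ^ k) = \<iota> a ^ k"
  by (induction k) (simp_all add: iota_1 iota_mult)

(* Scalar multiplication, kept folded so that the simplifier can collect scalars in
   front of words. *)
definition smul :: "complex \<Rightarrow> 'a \<Rightarrow> 'a" where
  "smul c x = \<iota> c * x"

lemma smul_left: "smul c x * y = smul c (x * y)" by (simp add: smul_def mult.assoc)
lemma smul_right: "x * smul c y = smul c (x * y)"
  using iota_central unfolding smul_def central_def by (metis mult.assoc)
lemma smul_smul: "smul c (smul d x) = smul (c * d) x" by (simp add: smul_def iota_mult mult.assoc)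
lemma smul_add: "smul c (x + y) = smul c x + smul c y" by (simp add: smul_def distrib_left)
lemma smul_diff: "smul c (x - y) = smul c x - smul c y" by (simp add: smul_def right_diff_distrib)
lemma smul_minus: "smul c (- x) = - smul c x" by (simp add: smul_def)
lemma smul_one: "smul 1 x = x" by (simp add: smul_def iota_1)
lemma smul_zero: "smul 0 x = 0" by (simp add: smul_def iota_0)
lemma smul_add_scalar: "smul c x + smul d x = smul (c + d) x"
  by (simp add: smul_def iota_add distrib_right)
lemma smul_add_scalar_assoc: "smul c x + (smul d x + r) = smul (c + d) x + r"
  by (simp add: smul_add_scalar flip: add.assoc)

lemmas smul_simps = smul_left smul_right smul_smul smul_add smul_diff smul_minus smul_one smul_zero

lemma K_zero: "K 0 0 0 = 1" using rels unfolding Uq_gl3_rels_def by metis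
lemma K_mult: "K a b c * K a' b' c' = K (a + a') (b + b') (c + c')"
  using rels unfolding Uq_gl3_rels_def by metis
lemma K_inverse: "K (-a) (-b) (-c) * K a b c = 1" by (simp add: K_mult K_zero)

lemma commute_from_conjugation:
  assumes "k * x * k' = smul s x" and "k' * k = 1"
  shows "k * x = smul s (x * k)"
proof -
  have "k * x = k * x * (k' * k)" using assms(2) by simp
  also have "\<dots> = smul s x * k" using assms(1) by (simp flip: mult.assoc)
  finally show ?thesis by (simp add: smul_left)
qed

lemma K_E1: "K a b c * E1 = smul (qp h (a - b)) (E1 * K a b c)"
  by (rule commute_from_conjugation[OF _ K_inverse])
    (use rels in \<open>unfold Uq_gl3_rels_def smul_def, blast\<close>)
lemma K_E2: "K a b c * E2 = smul (qp h (b - c)) (E2 * K a b c)"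
  by (rule commute_from_conjugation[OF _ K_inverse])
    (use rels in \<open>unfold Uq_gl3_rels_def smul_def, blast\<close>)
lemma K_F1: "K a b c * F1 = smul (qp h (-(a - b))) (F1 * K a b c)"
  by (rule commute_from_conjugation[OF _ K_inverse])
    (use rels in \<open>unfold Uq_gl3_rels_def smul_def, blast\<close>)
lemma K_F2: "K a b c * F2 = smul (qp h (-(b - c))) (F2 * K a b c)"
  by (rule commute_from_conjugation[OF _ K_inverse])
    (use rels in \<open>unfold Uq_gl3_rels_def smul_def, blast\<close>)

lemma E1_F1: "E1 * F1 = F1 * E1 + smul (1 / kap h) (K 1 (-1) 0 - K (-1) 1 0)"
  using rels unfolding Uq_gl3_rels_def smul_def by (metis diff_add_cancel add.commute)
lemma E2_F2: "E2 * F2 = F2 * E2 + smul (1 / kap h) (K 0 1 (-1) - K 0 (-1) 1)"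
  using rels unfolding Uq_gl3_rels_def smul_def by (metis diff_add_cancel add.commute)
lemma E1_F2: "E1 * F2 = F2 * E1"
  using rels unfolding Uq_gl3_rels_def by (metis right_minus_eq)
lemma E2_F1: "E2 * F1 = F1 * E2"
  using rels unfolding Uq_gl3_rels_def by (metis right_minus_eq)

(* Rewrite system bringing words in the generators to the normal form F E K. *)
lemmas generator_rules =
  E1_F1 E2_F2 E1_F2 E2_F1 K_E1 K_E2 K_F1 K_F2 K_mult
  E1_F1[THEN mult_assoc_rule] E2_F2[THEN mult_assoc_rule]
  E1_F2[THEN mult_assoc_rule] E2_F1[THEN mult_assoc_rule]
  K_E1[THEN mult_assoc_rule] K_E2[THEN mult_assoc_rule]
  K_F1[THEN mult_assoc_rule] K_F2[THEN mult_assoc_rule] K_mult[THEN mult_assoc_rule]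
  K_zero qp_add qp_add_assoc qp_zero

definition e3 :: 'a where "e3 = E1 * E2 - smul (qp h (-1)) (E2 * E1)"
definition f3 :: 'a where "f3 = F2 * F1 - smul (qp h 1) (F1 * F2)"

(* E_3, F_3 satisfy the relations of a U_q(sl_2) with Cartan part q^{G_1-G_3}. *)
lemma e3_f3: "e3 * f3 = f3 * e3 + smul (1 / kap h) (K 1 0 (-1) - K (-1) 0 1)"
  by (simp add: e3_def f3_def algebra_simps smul_simps generator_rules
      kap_identity[OF kap_nz] smul_add_scalar[symmetric])
lemma K_e3: "K a b c * e3 = smul (qp h (a - c)) (e3 * K a b c)"
  by (simp add: e3_def algebra_simps smul_simps generator_rules smul_add_scalar smul_add_scalar_assoc)
lemma K_f3: "K a b c * f3 = smul (qp h (c - a)) (f3 * K a b c)"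
  by (simp add: f3_def algebra_simps smul_simps generator_rules smul_add_scalar smul_add_scalar_assoc)

lemmas root_vector_rules =
  e3_f3 K_e3 K_f3 K_mult e3_f3[THEN mult_assoc_rule] K_e3[THEN mult_assoc_rule]
  K_f3[THEN mult_assoc_rule] K_mult[THEN mult_assoc_rule] K_zero qp_add qp_add_assoc qp_zero

definition b0 :: 'a where "b0 = f3 * K (-1) 0 (-1)"
definition x3 :: 'a where "x3 = e3 * b0 - smul (qp h (-2)) (b0 * e3)"

lemma K_x3: "K (-2) 0 0 * x3 = x3 * K (-2) 0 0"
  by (simp add: x3_def b0_def algebra_simps smul_simps root_vector_rules
      smul_add_scalar smul_add_scalar_assoc)

lemma e3_x3: "e3 * x3 - x3 * e3 = smul (- (qp h (-2) * qint2 h)) (e3 * K (-2) 0 0)"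
  by (simp add: x3_def b0_def algebra_simps smul_simps root_vector_rules smul_add_scalar
      smul_add_scalar_assoc qp_identity_A[OF kap_nz])

lemma x3_b0: "x3 * b0 - b0 * x3 = smul (- (qp h (-2) * qint2 h)) (K (-2) 0 0 * b0)"
  by (simp add: x3_def b0_def algebra_simps smul_simps root_vector_rules smul_add_scalar
      smul_add_scalar_assoc qp_identity_B[OF kap_nz])

lemma N11_ring_inv: "ring_inv (N11 \<iota> K c) = Abs_fps (\<lambda>k. \<iota> (c ^ k) * K (-2) 0 0 ^ k)"
proof -
  have "(\<iota> c * K (-2) 0 0) ^ k = \<iota> (c ^ k) * K (-2) 0 0 ^ k" for k
    by (simp add: power_mult_central[OF iota_central] iota_power)
  then show ?thesis
    unfolding N11_def fps_geometric_ring_inv by (intro arg_cong[where f = Abs_fps] ext) simp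
qed

(* The normalisation [2]_q^{-1} cancels the factor [2]_q of the eigen-relations. *)
lemma scalar_product:
  assumes "qint2 h \<noteq> 0"
  shows "\<iota> (1 / qint2 h) * \<iota> (- (qp h (-2) * qint2 h)) = \<iota> (- qp h (-2))"
  using assms by (simp flip: iota_mult)

lemma Aseq_e3:
  assumes "qint2 h \<noteq> 0"
  shows "Aseq (\<iota> (1 / qint2 h)) e3 x3 k = \<iota> ((- qp h (-2)) ^ k) * (e3 * K (-2) 0 0 ^ k)"
  using Aseq_closed_form[OF iota_central iota_central e3_x3[unfolded smul_def] K_x3]
    scalar_product[OF assms] by (simp add: iota_power)

lemma Bseq_b0:
  assumes "qint2 h \<noteq> 0"
  shows "Bseq (\<iota> (1 / qint2 h)) b0 x3 k = \<iota> ((- qp h (-2)) ^ k) * (K (-2) 0 0 ^ k * b0)"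
  using Bseq_closed_form[OF iota_central iota_central x3_b0[unfolded smul_def] K_x3]
    scalar_product[OF assms] by (simp add: iota_power)

lemma E_generating_function:
  assumes "qint2 h \<noteq> 0"
  shows "Abs_fps (Aseq (\<iota> (1 / qint2 h)) e3 x3)
    = fps_const (\<iota> (1 / kap h)) * fps_const (\<iota> (kap h) * e3) * ring_inv (N11 \<iota> K (- qp h (-2)))"
proof (rule fps_ext)
  fix k
  let ?a = "- qp h (-2)" and ?T = "K (-2) 0 0"
  let ?rhs = "fps_const (\<iota> (1 / kap h)) * fps_const (\<iota> (kap h) * e3) * ring_inv (N11 \<iota> K ?a)"
  have "fps_nth ?rhs k = \<iota> (1 / kap h) * (\<iota> (kap h) * e3) * (\<iota> (?a ^ k) * ?T ^ k)"
    by (simp add: N11_ring_inv)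
  also have "\<dots> = e3 * (\<iota> (?a ^ k) * ?T ^ k)"
    using kap_nz by (simp add: iota_1 flip: mult.assoc iota_mult)
  also have "\<dots> = \<iota> (?a ^ k) * (e3 * ?T ^ k)"
    using iota_central unfolding central_def by (metis mult.assoc)
  finally show "fps_nth (Abs_fps (Aseq (\<iota> (1 / qint2 h)) e3 x3)) k = fps_nth ?rhs k"
    by (simp add: Aseq_e3[OF assms])
qed

lemma F_generating_function:
  assumes "qint2 h \<noteq> 0"
  shows "Abs_fps (Bseq (\<iota> (1 / qint2 h)) b0 x3)
    = fps_const (\<iota> (1 / kap h) * \<iota> (qp h (-1))) * ring_inv (N11 \<iota> K (- qp h (-2)))
        * fps_const (\<iota> (kap h * qp h 1) * f3 * K (-1) 0 (-1))"
proof (rule fps_ext)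
  fix k
  let ?a = "- qp h (-2)" and ?T = "K (-2) 0 0"
  let ?rhs = "fps_const (\<iota> (1 / kap h) * \<iota> (qp h (-1))) * ring_inv (N11 \<iota> K ?a)
        * fps_const (\<iota> (kap h * qp h 1) * f3 * K (-1) 0 (-1))"
  have scalar: "1 / kap h * qp h (-1) * (kap h * qp h 1) * ?a ^ k = ?a ^ k"
    using kap_nz qp_add[of h "-1" 1] qp_zero by (simp add: field_simps)
  have "fps_nth ?rhs k = \<iota> (1 / kap h) * \<iota> (qp h (-1)) * (\<iota> (?a ^ k) * ?T ^ k)
      * (\<iota> (kap h * qp h 1) * f3 * K (-1) 0 (-1))"
    by (simp add: N11_ring_inv)
  also have "\<dots> = smul (1 / kap h * qp h (-1) * (kap h * qp h 1) * ?a ^ k) (?T ^ k * b0)"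
    by (simp add: b0_def smul_simps mult.assoc mult.left_commute mult.commute flip: smul_def iota_mult)
  also have "\<dots> = \<iota> (?a ^ k) * (?T ^ k * b0)" by (simp only: scalar smul_def)
  finally show "fps_nth (Abs_fps (Bseq (\<iota> (1 / qint2 h)) b0 x3)) k = fps_nth ?rhs k"
    by (simp add: Bseq_b0[OF assms])
qed

end

theorem mainTheorem7:
  fixes h :: complex and \<iota> :: "complex \<Rightarrow> 'a::ring_1"
    and E1 E2 F1 F2 :: 'a and K :: "complex \<Rightarrow> complex \<Rightarrow> complex \<Rightarrow> 'a"
  assumes q2: "(exp h)^2 \<noteq> 1"
    and two: "qint2 h \<noteq> 0"
    and rels: "Uq_gl3_rels h \<iota> E1 E2 F1 F2 K"
  defines "E3 \<equiv> E1 * E2 - \<iota> (qp h (-1)) * E2 * E1"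
    and "F3 \<equiv> F2 * F1 - \<iota> (qp h 1) * F1 * F2"
  defines "A0 \<equiv> E3"
    and "B0 \<equiv> F3 * K (-1) 0 (-1)"
  defines "X \<equiv> A0 * B0 - \<iota> (qp h (-2)) * B0 * A0"
  defines "N13 \<equiv> \<iota> (kap h * qp h 1) * F3 * K (-1) 0 (-1)"
    and "N31 \<equiv> \<iota> (kap h) * E3"
  shows "Abs_fps (Aseq (\<iota> (1 / qint2 h)) A0 X)
           = fps_const (\<iota> (1 / kap h)) * fps_const N31 * ring_inv (N11 \<iota> K (- qp h (-2)))
       \<and> Abs_fps (Bseq (\<iota> (1 / qint2 h)) B0 X)
           = fps_const (\<iota> (1 / kap h) * \<iota> (qp h (-1))) * ring_inv (N11 \<iota> K (- qp h (-2)))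
               * fps_const N13"
proof -
  interpret uq_gl3 h \<iota> E1 E2 F1 F2 K using rels q2 by unfold_locales
  have E3: "E3 = e3" unfolding E3_def e3_def smul_def by (simp add: mult.assoc)
  have F3: "F3 = f3" unfolding F3_def f3_def smul_def by (simp add: mult.assoc)
  have B0: "B0 = b0" unfolding B0_def b0_def F3 ..
  have X: "X = x3" unfolding X_def x3_def A0_def B0 E3 smul_def by (simp add: mult.assoc)
  show ?thesis
    using E_generating_function[OF two] F_generating_function[OF two]
    unfolding A0_def B0 X N31_def N13_def E3 F3 by simp
qed

end
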